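(* Let $\alpha \ge 1$. Suppose there exists a polynomial-time $\alpha$-approximation algorithm for the Vector Bin Packing Problem (VBPP) with unit bin capacities. Then there exists an $\alpha\sqrt{d}$-approximation algorithm for the Bin Packing Problem with Scenarios (BPPS), where $d$ is the number of scenarios of the BPPS instance.
   Context: BPPS: given a number $d$ of scenarios, a set $\mathcal{I}=\{1,\dots,n\}$ of items, each item $i$ having a size $s_i\in\mathbb{Q}_+$ and a set of scenarios $\mathcal{K}_i\subseteq\{1,\dots,d\}$, and unlimited identical bins of capacity $1$ (instances are normalized so that the capacity is $1$). For each scenario $k$, $S_k=\{i\in\mathcal{I}: k\in\mathcal{K}_i\}$. A solution is a partition $\mathcal{B}$ of $\mathcal{I}$ such that for every part $B\in\mathcal{B}$ and every scenario $k$, $\sum_{i\in B\cap S_k}s_i\le 1$. The objective is to minimize $\mathrm{val}_{BPPS}(\mathcal{B})=\max_{k\in[d]}|\{B\in\mathcal{B}: B\cap S_k\neq\emptyset\}|$. VBPP: given $d$ resources and items $i$ with consumption vectors $s_i\in\mathbb{Q}_+^d$, and bins of capacity $1$ in each resource, a solution is a partition $\mathcal{B}$ of the items such that for each part $B$ and resource $k$, $\sum_{i\in B}s_{ik}\le 1$; the objective is to minimize $\mathrm{val}_{VBPP}(\mathcal{B})=|\mathcal{B}|$. An $\alpha$-approximation algorithm for a minimization problem returns, for every instance, a feasible solution of value at most $\alpha$ times the optimum. *)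

theory Defs
  imports Complex_Main "HOL-Library.Disjoint_Sets"
begin

definition bpps_valid :: "nat \<Rightarrow> nat \<Rightarrow> (nat \<Rightarrow> rat) \<Rightarrow> (nat \<Rightarrow> nat set) \<Rightarrow> bool" where
  "bpps_valid d n s K \<longleftrightarrow> d \<ge> 1 \<and> (\<forall>i<n. 0 \<le> s i \<and> s i \<le> 1 \<and> K i \<subseteq> {..<d})"

definition scen_items :: "nat \<Rightarrow> (nat \<Rightarrow> nat set) \<Rightarrow> nat \<Rightarrow> nat set" where
  "scen_items n K k = {i. i < n \<and> k \<in> K i}"

definition bpps_feasible ::
  "nat \<Rightarrow> nat \<Rightarrow> (nat \<Rightarrow> rat) \<Rightarrow> (nat \<Rightarrow> nat set) \<Rightarrow> nat set set \<Rightarrow> bool" where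
  "bpps_feasible d n s K P \<longleftrightarrow> partition_on {..<n} P \<and>
     (\<forall>B\<in>P. \<forall>k<d. (\<Sum>i\<in>B \<inter> scen_items n K k. s i) \<le> 1)"

definition bpps_val :: "nat \<Rightarrow> nat \<Rightarrow> (nat \<Rightarrow> nat set) \<Rightarrow> nat set set \<Rightarrow> nat" where
  "bpps_val d n K P = Max ((\<lambda>k. card {B \<in> P. B \<inter> scen_items n K k \<noteq> {}}) ` {..<d})"

definition bpps_approx ::
  "(nat \<Rightarrow> real) \<Rightarrow> (nat \<Rightarrow> nat \<Rightarrow> (nat \<Rightarrow> rat) \<Rightarrow> (nat \<Rightarrow> nat set) \<Rightarrow> nat set set) \<Rightarrow> bool" where
  "bpps_approx r Alg \<longleftrightarrow> (\<forall>d n s K. bpps_valid d n s K \<longrightarrow>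
      bpps_feasible d n s K (Alg d n s K) \<and>
      (\<forall>P. bpps_feasible d n s K P \<longrightarrow>
         real (bpps_val d n K (Alg d n s K)) \<le> r d * real (bpps_val d n K P)))"

definition vbpp_valid :: "nat \<Rightarrow> nat \<Rightarrow> (nat \<Rightarrow> nat \<Rightarrow> rat) \<Rightarrow> bool" where
  "vbpp_valid d n v \<longleftrightarrow> (\<forall>i<n. \<forall>k<d. 0 \<le> v i k \<and> v i k \<le> 1)"

definition vbpp_feasible :: "nat \<Rightarrow> nat \<Rightarrow> (nat \<Rightarrow> nat \<Rightarrow> rat) \<Rightarrow> nat set set \<Rightarrow> bool" where
  "vbpp_feasible d n v P \<longleftrightarrow> partition_on {..<n} P \<and>
     (\<forall>B\<in>P. \<forall>k<d. (\<Sum>i\<in>B. v i k) \<le> 1)"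

definition vbpp_val :: "nat set set \<Rightarrow> nat" where
  "vbpp_val P = card P"

definition vbpp_approx ::
  "real \<Rightarrow> (nat \<Rightarrow> nat \<Rightarrow> (nat \<Rightarrow> nat \<Rightarrow> rat) \<Rightarrow> nat set set) \<Rightarrow> bool" where
  "vbpp_approx \<alpha> Alg \<longleftrightarrow> (\<forall>d n v. vbpp_valid d n v \<longrightarrow>
      vbpp_feasible d n v (Alg d n v) \<and>
      (\<forall>P. vbpp_feasible d n v P \<longrightarrow>
         real (vbpp_val (Alg d n v)) \<le> \<alpha> * real (vbpp_val P)))"

text \<open>Item i consumes s i in resource k if k is one of its scenarios, 0 otherwise.
  A VBPP solution of this instance is used unchanged as the BPPS solution.\<close>
definition vbpp_of :: "(nat \<Rightarrow> rat) \<Rightarrow> (nat \<Rightarrow> nat set) \<Rightarrow> nat \<Rightarrow> nat \<Rightarrow> rat" where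
  "vbpp_of s K = (\<lambda>i k. if k \<in> K i then s i else 0)"

end

theory Submission
  imports Defs
begin

text \<open>A VBPP solution of the instance vbpp_of s K is exactly a BPPS solution of (s, K), and its
  BPPS value is at most its number of bins. Conversely, a BPPS solution of value m yields one with
  at most sqrt d * m bins: merge two bins sharing no scenario as long as possible; this keeps
  feasibility and does not increase the number of bins meeting any scenario. Afterwards every two
  bins share a scenario, so counting ordered pairs of distinct bins scenario by scenario gives
  N (N - 1) \<le> d m (m - 1), whence N \<le> sqrt d * m.\<close>

lemma partition_on_merge:
  assumes "partition_on A P" "p \<in> P" "q \<in> P"
  shows "partition_on A (insert (p \<union> q) (P - {p, q}))"
proof (rule partition_onI)
  show "\<Union>(insert (p \<union> q) (P - {p, q})) = A"
    using assms partition_onD1 by fastforce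
  show "{} \<notin> insert (p \<union> q) (P - {p, q})"
    using assms partition_onD3 by fastforce
  have disj: "disjnt x y" if "x \<in> P" "y \<in> P" "x \<noteq> y" for x y
    using partition_onD2[OF assms(1)] that by (auto simp: disjoint_def disjnt_def)
  then have merged_disj: "disjnt (p \<union> q) y" if "y \<in> P - {p, q}" for y
    using that assms(2,3) by (auto simp: disjnt_sym)
  fix x y
  assume "x \<in> insert (p \<union> q) (P - {p, q})" "y \<in> insert (p \<union> q) (P - {p, q})" "x \<noteq> y"
  then consider "x = p \<union> q" "y \<in> P - {p, q}" | "y = p \<union> q" "x \<in> P - {p, q}"
    | "x \<in> P - {p, q}" "y \<in> P - {p, q}"
    by blast
  then show "disjnt x y"
    using disj merged_disj \<open>x \<noteq> y\<close> by cases (auto simp: disjnt_sym)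
qed

lemma card_merge_less:
  assumes "finite P" "p \<in> P" "q \<in> P" "p \<noteq> q"
  shows "card (insert (p \<union> q) (P - {p, q})) < card P"
proof -
  have "card (insert (p \<union> q) (P - {p, q})) \<le> Suc (card (P - {p, q}))"
    using assms(1) by (simp add: card_insert_if)
  also have "card (P - {p, q}) = card P - 2"
    using assms by (simp add: card_Diff_subset)
  finally show ?thesis
    using assms card_mono[of P "{p, q}"] by simp
qed

lemma card_meeting_merge_le:
  assumes "finite P" "p \<in> P" "q \<in> P"
  shows "card {B \<in> insert (p \<union> q) (P - {p, q}). B \<inter> S \<noteq> {}}
    \<le> card {B \<in> P. B \<inter> S \<noteq> {}}"
proof -
  define g where "g B = (if B \<in> {p, q} then p \<union> q else B)" for B
  have "{B \<in> insert (p \<union> q) (P - {p, q}). B \<inter> S \<noteq> {}} \<subseteq> g ` {B \<in> P. B \<inter> S \<noteq> {}}"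
  proof
    fix B assume B: "B \<in> {B \<in> insert (p \<union> q) (P - {p, q}). B \<inter> S \<noteq> {}}"
    show "B \<in> g ` {B \<in> P. B \<inter> S \<noteq> {}}"
    proof (cases "B = p \<union> q")
      case True
      with B obtain r where "r \<in> {p, q}" "r \<inter> S \<noteq> {}" by blast
      then have "B = g r" "r \<in> {B \<in> P. B \<inter> S \<noteq> {}}"
        using True assms(2,3) by (auto simp: g_def)
      then show ?thesis by (rule image_eqI)
    next
      case False
      with B have "B \<in> P - {p, q}" "B \<inter> S \<noteq> {}" by auto
      then show ?thesis
        unfolding g_def by (intro image_eqI[where x = B]) auto
    qed
  qed
  then have "card {B \<in> insert (p \<union> q) (P - {p, q}). B \<inter> S \<noteq> {}}
      \<le> card (g ` {B \<in> P. B \<inter> S \<noteq> {}})"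
    using assms(1) by (intro card_mono) auto
  also have "\<dots> \<le> card {B \<in> P. B \<inter> S \<noteq> {}}"
    using assms(1) by (intro card_image_le) auto
  finally show ?thesis .
qed

lemma card_distinct_pairs:
  assumes "finite A"
  shows "card {(x, y). x \<in> A \<and> y \<in> A \<and> x \<noteq> y} = card A * (card A - 1)"
proof -
  have "{(x, y). x \<in> A \<and> y \<in> A \<and> x \<noteq> y} = A \<times> A - (\<lambda>x. (x, x)) ` A" by auto
  moreover have "card ((\<lambda>x. (x, x)) ` A) = card A" by (simp add: card_image inj_on_def)
  ultimately show ?thesis
    using assms
    by (simp add: card_Diff_subset card_cartesian_product diff_mult_distrib2 image_subset_iff)
qed

lemma card_distinct_pairs_le_if_covered:
  fixes Q :: "'a set" and meets :: "'a \<Rightarrow> nat \<Rightarrow> bool"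
  assumes "finite Q"
    and meeting_le: "\<And>k. k < d \<Longrightarrow> card {x \<in> Q. meets x k} \<le> m"
    and covered: "\<And>x y. x \<in> Q \<Longrightarrow> y \<in> Q \<Longrightarrow> x \<noteq> y \<Longrightarrow> \<exists>k<d. meets x k \<and> meets y k"
  shows "card Q * (card Q - 1) \<le> d * (m * (m - 1))"
proof -
  define pairs where "pairs X = {(x, y). x \<in> X \<and> y \<in> X \<and> x \<noteq> y}" for X :: "'a set"
  define meeting where "meeting k = {x \<in> Q. meets x k}" for k
  have "pairs Q \<subseteq> (\<Union>k<d. pairs (meeting k))"
    using covered by (fastforce simp: pairs_def meeting_def)
  moreover have "finite (\<Union>k<d. pairs (meeting k))"
    by (rule finite_subset[of _ "Q \<times> Q"]) (use assms(1) in \<open>auto simp: pairs_def meeting_def\<close>)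
  ultimately have "card (pairs Q) \<le> card (\<Union>k<d. pairs (meeting k))"
    by (rule card_mono[rotated])
  also have "\<dots> \<le> (\<Sum>k<d. card (pairs (meeting k)))"
    by (rule card_UN_le) simp
  also have "\<dots> \<le> (\<Sum>k<d. m * (m - 1))"
  proof (rule sum_mono)
    fix k assume "k \<in> {..<d}"
    then have "card (meeting k) \<le> m"
      using meeting_le by (simp add: meeting_def)
    then show "card (pairs (meeting k)) \<le> m * (m - 1)"
      using card_distinct_pairs[of "meeting k"] assms(1)
      by (simp add: pairs_def meeting_def mult_le_mono)
  qed
  finally show ?thesis
    using card_distinct_pairs[OF assms(1)] by (simp add: pairs_def)
qed

lemma le_sqrt_mult_if_mult_pred_le:
  fixes N d m :: nat
  assumes "N * (N - 1) \<le> d * (m * (m - 1))" "1 \<le> d" "1 \<le> m"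
  shows "real N \<le> sqrt (real d) * real m"
proof (rule ccontr)
  define x where "x = sqrt (real d) * real m"
  have "1 \<le> sqrt (real d)"
    using assms(2) by simp
  then have "sqrt (real d) \<le> real d"
    using mult_left_mono[of 1 "sqrt (real d)" "sqrt (real d)"] by simp
  have "1 \<le> x"
    unfolding x_def using assms(3) \<open>1 \<le> sqrt (real d)\<close>
      mult_mono[of 1 "sqrt (real d)" 1 "real m"]
    by simp
  have "real d * (real m * (real m - 1)) = real d * real m * real m - real d * real m"
    by (simp add: algebra_simps)
  also have "\<dots> \<le> real d * real m * real m - sqrt (real d) * real m"
    using \<open>sqrt (real d) \<le> real d\<close> by (simp add: mult_right_mono)
  also have "\<dots> = x * (x - 1)"
    by (simp add: x_def algebra_simps)
  finally have bound: "real d * (real m * (real m - 1)) \<le> x * (x - 1)" .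
  assume "\<not> real N \<le> x"
  then have "x * (x - 1) < real N * (real N - 1)"
    using \<open>1 \<le> x\<close> by (intro mult_strict_mono) auto
  moreover have "real (k * (k - 1)) = real k * (real k - 1)" for k :: nat
    by (cases k) (auto simp: algebra_simps)
  then have "real N * (real N - 1) \<le> real d * (real m * (real m - 1))"
    using assms(1) by (metis of_nat_le_iff of_nat_mult)
  ultimately show False
    using bound by linarith
qed

lemma sum_vbpp_of:
  assumes "B \<subseteq> {..<n}"
  shows "(\<Sum>i\<in>B. vbpp_of s K i k) = (\<Sum>i\<in>B \<inter> scen_items n K k. s i)"
proof -
  have "B \<inter> scen_items n K k = {i \<in> B. k \<in> K i}"
    using assms by (auto simp: scen_items_def)
  then show ?thesis
    using assms finite_subset[OF assms] by (simp add: vbpp_of_def sum.inter_filter)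
qed

lemma bpps_feasible_iff_vbpp_feasible:
  "bpps_feasible d n s K P \<longleftrightarrow> vbpp_feasible d n (vbpp_of s K) P"
proof -
  have sums_eq: "(\<Sum>i\<in>B. vbpp_of s K i k) = (\<Sum>i\<in>B \<inter> scen_items n K k. s i)"
    if "partition_on {..<n} P" "B \<in> P" for B k
    using that by (intro sum_vbpp_of) (auto dest: partition_onD1)
  show ?thesis
    unfolding bpps_feasible_def vbpp_feasible_def using sums_eq by auto
qed

lemma vbpp_valid_vbpp_of: "bpps_valid d n s K \<Longrightarrow> vbpp_valid d n (vbpp_of s K)"
  by (simp add: bpps_valid_def vbpp_valid_def vbpp_of_def)

lemma card_meeting_le_bpps_val:
  "k < d \<Longrightarrow> card {B \<in> P. B \<inter> scen_items n K k \<noteq> {}} \<le> bpps_val d n K P"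
  unfolding bpps_val_def by (intro Max_ge) auto

lemma bpps_val_le_card:
  assumes "1 \<le> d" "finite P"
  shows "bpps_val d n K P \<le> card P"
  unfolding bpps_val_def using assms
  by (subst Max_le_iff) (auto intro: card_mono simp: lessThan_empty_iff)

lemma bpps_val_eq_0_iff:
  assumes "partition_on {..<n} P" "1 \<le> d"
  shows "bpps_val d n K P = 0 \<longleftrightarrow> (\<forall>k<d. scen_items n K k = {})"
proof -
  have "finite P"
    using finite_elements[OF finite_lessThan assms(1)] .
  have "bpps_val d n K P = 0 \<longleftrightarrow> bpps_val d n K P \<le> 0"
    by simp
  also have "\<dots> \<longleftrightarrow> (\<forall>k<d. {B \<in> P. B \<inter> scen_items n K k \<noteq> {}} = {})"
    unfolding bpps_val_def using \<open>finite P\<close> assms(2)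
    by (subst Max_le_iff) (auto simp: lessThan_empty_iff)
  also have "\<dots> \<longleftrightarrow> (\<forall>k<d. scen_items n K k = {})"
    using partition_onD1[OF assms(1)] by (auto simp: scen_items_def)
  finally show ?thesis .
qed

lemma bpps_feasible_finite: "bpps_feasible d n s K P \<Longrightarrow> finite P"
  unfolding bpps_feasible_def using finite_elements[OF finite_lessThan] by blast

lemma bpps_feasible_merge:
  assumes feasible: "bpps_feasible d n s K Q" and "p \<in> Q" "q \<in> Q"
    and no_common: "\<forall>k<d. p \<inter> scen_items n K k = {} \<or> q \<inter> scen_items n K k = {}"
  shows "bpps_feasible d n s K (insert (p \<union> q) (Q - {p, q}))"
proof -
  have load: "(\<Sum>i\<in>B \<inter> scen_items n K k. s i) \<le> 1" if "B \<in> Q" "k < d" for B k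
    using feasible that by (simp add: bpps_feasible_def)
  have "(\<Sum>i\<in>(p \<union> q) \<inter> scen_items n K k. s i) \<le> 1" if "k < d" for k
  proof -
    from no_common that have "(p \<union> q) \<inter> scen_items n K k = p \<inter> scen_items n K k
        \<or> (p \<union> q) \<inter> scen_items n K k = q \<inter> scen_items n K k"
      by blast
    then show ?thesis
      using load \<open>p \<in> Q\<close> \<open>q \<in> Q\<close> that by metis
  qed
  moreover have "partition_on {..<n} (insert (p \<union> q) (Q - {p, q}))"
    using feasible assms(2,3) by (simp add: bpps_feasible_def partition_on_merge)
  ultimately show ?thesis
    using load by (auto simp: bpps_feasible_def)
qed

lemma exists_bpps_feasible_card_le_sqrt_bpps_val:
  assumes feasible: "bpps_feasible d n s K P" and "1 \<le> d" "1 \<le> bpps_val d n K P"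
  shows "\<exists>Q. bpps_feasible d n s K Q \<and> real (card Q) \<le> sqrt (real d) * real (bpps_val d n K P)"
proof -
  define m where "m = bpps_val d n K P"
  define meets where "meets B k \<longleftrightarrow> B \<inter> scen_items n K k \<noteq> {}" for B :: "nat set" and k
  define admissible where
    "admissible Q \<longleftrightarrow> bpps_feasible d n s K Q \<and> (\<forall>k<d. card {B \<in> Q. meets B k} \<le> m)" for Q
  have "admissible P"
    using feasible card_meeting_le_bpps_val by (simp add: admissible_def meets_def m_def)
  then obtain Q where "admissible Q" and Q_min: "\<And>Q'. admissible Q' \<Longrightarrow> card Q \<le> card Q'"
    using ex_has_least_nat[of admissible P card] by blast
  then have Q_feasible: "bpps_feasible d n s K Q"
    and Q_meeting_le: "\<And>k. k < d \<Longrightarrow> card {B \<in> Q. meets B k} \<le> m"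
    by (auto simp: admissible_def)
  have "finite Q"
    using Q_feasible by (rule bpps_feasible_finite)
  have share: "\<exists>k<d. meets B k \<and> meets B' k" if "B \<in> Q" "B' \<in> Q" "B \<noteq> B'" for B B'
  proof (rule ccontr)
    assume "\<not> ?thesis"
    then have "admissible (insert (B \<union> B') (Q - {B, B'}))"
      using bpps_feasible_merge[OF Q_feasible that(1,2)]
        card_meeting_merge_le[OF \<open>finite Q\<close> that(1,2)] Q_meeting_le
      unfolding admissible_def meets_def by (meson le_trans)
    then show False
      using Q_min card_merge_less[OF \<open>finite Q\<close> that] by fastforce
  qed
  have "card Q * (card Q - 1) \<le> d * (m * (m - 1))"
    using card_distinct_pairs_le_if_covered[OF \<open>finite Q\<close> Q_meeting_le share] .
  then have "real (card Q) \<le> sqrt (real d) * real m"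
    using le_sqrt_mult_if_mult_pred_le assms(2,3) m_def by blast
  then show ?thesis
    using Q_feasible m_def by blast
qed

lemma bpps_val_le_sqrt_mult_if_card_le:
  assumes R_feasible: "bpps_feasible d n s K R" and P_feasible: "bpps_feasible d n s K P"
    and "1 \<le> d" "0 \<le> \<alpha>"
    and R_approx: "\<And>Q. bpps_feasible d n s K Q \<Longrightarrow> real (card R) \<le> \<alpha> * real (card Q)"
  shows "real (bpps_val d n K R) \<le> \<alpha> * sqrt (real d) * real (bpps_val d n K P)"
proof (cases "bpps_val d n K P = 0")
  case True
  then have "bpps_val d n K R = 0"
    using P_feasible R_feasible \<open>1 \<le> d\<close> by (simp add: bpps_feasible_def bpps_val_eq_0_iff)
  then show ?thesis
    using True by simp
next
  case False
  then obtain Q where "bpps_feasible d n s K Q"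
    and Q_card: "real (card Q) \<le> sqrt (real d) * real (bpps_val d n K P)"
    using exists_bpps_feasible_card_le_sqrt_bpps_val[OF P_feasible \<open>1 \<le> d\<close>] by auto
  have "real (bpps_val d n K R) \<le> real (card R)"
    using bpps_val_le_card[OF \<open>1 \<le> d\<close> bpps_feasible_finite[OF R_feasible]] by simp
  also have "\<dots> \<le> \<alpha> * real (card Q)"
    using R_approx \<open>bpps_feasible d n s K Q\<close> .
  also have "\<dots> \<le> \<alpha> * (sqrt (real d) * real (bpps_val d n K P))"
    using Q_card \<open>0 \<le> \<alpha>\<close> by (simp add: mult_left_mono)
  finally show ?thesis
    by (simp add: mult.assoc)
qed

theorem corollary1:
  fixes \<alpha> :: real
    and A :: "nat \<Rightarrow> nat \<Rightarrow> (nat \<Rightarrow> nat \<Rightarrow> rat) \<Rightarrow> nat set set"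
  assumes "\<alpha> \<ge> 1"
    and "vbpp_approx \<alpha> A"
  shows "bpps_approx (\<lambda>d. \<alpha> * sqrt (real d)) (\<lambda>d n s K. A d n (vbpp_of s K))"
  unfolding bpps_approx_def
proof (intro allI impI conjI)
  fix d n s K
  assume valid: "bpps_valid d n s K"
  let ?R = "A d n (vbpp_of s K)"
  have "vbpp_feasible d n (vbpp_of s K) ?R"
    and R_approx: "\<And>Q. vbpp_feasible d n (vbpp_of s K) Q
      \<Longrightarrow> real (card ?R) \<le> \<alpha> * real (card Q)"
    using assms(2) vbpp_valid_vbpp_of[OF valid] by (auto simp: vbpp_approx_def vbpp_val_def)
  then show R_feasible: "bpps_feasible d n s K ?R"
    by (simp add: bpps_feasible_iff_vbpp_feasible)
  fix P
  assume "bpps_feasible d n s K P"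
  then show "real (bpps_val d n K ?R) \<le> \<alpha> * sqrt (real d) * real (bpps_val d n K P)"
    using R_feasible valid assms(1) R_approx
    by (intro bpps_val_le_sqrt_mult_if_card_le)
      (auto simp: bpps_valid_def bpps_feasible_iff_vbpp_feasible)
qed

end
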